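(* If $P$ is a finite interval order having an interval representation in which every interval has length $0$ or $1$, then $\dim(P) \le 3$.
   Context: Posets are finite and reflexive. An interval representation of a poset $P$ assigns to each element $x$ a closed bounded interval $[\ell(x), r(x)]$ (possibly degenerate, $\ell(x)=r(x)$, which has length $0$) such that for distinct $x,y$, $x<y$ in $P$ if and only if $r(x)<\ell(y)$. The dimension $\dim(P)$ is the minimum number of linear extensions of $P$ whose intersection is $P$ (i.e. $x<y$ in $P$ iff $x<y$ in each of them). *)

theory Defs
  imports Complex_Main
begin

definition poset_on :: "'a set \<Rightarrow> ('a \<Rightarrow> 'a \<Rightarrow> bool) \<Rightarrow> bool" where
  "poset_on X le \<longleftrightarrow>
     (\<forall>x\<in>X. le x x) \<and>
     (\<forall>x\<in>X. \<forall>y\<in>X. le x y \<and> le y x \<longrightarrow> x = y) \<and>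
     (\<forall>x\<in>X. \<forall>y\<in>X. \<forall>z\<in>X. le x y \<and> le y z \<longrightarrow> le x z)"

definition linear_extension :: "'a set \<Rightarrow> ('a \<Rightarrow> 'a \<Rightarrow> bool) \<Rightarrow> ('a \<Rightarrow> 'a \<Rightarrow> bool) \<Rightarrow> bool" where
  "linear_extension X le L \<longleftrightarrow>
     poset_on X L \<and>
     (\<forall>x\<in>X. \<forall>y\<in>X. L x y \<or> L y x) \<and>
     (\<forall>x\<in>X. \<forall>y\<in>X. le x y \<longrightarrow> L x y)"

definition realizer :: "'a set \<Rightarrow> ('a \<Rightarrow> 'a \<Rightarrow> bool) \<Rightarrow> nat \<Rightarrow> (nat \<Rightarrow> 'a \<Rightarrow> 'a \<Rightarrow> bool) \<Rightarrow> bool" where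
  "realizer X le k Ls \<longleftrightarrow>
     (\<forall>i<k. linear_extension X le (Ls i)) \<and>
     (\<forall>x\<in>X. \<forall>y\<in>X. x \<noteq> y \<longrightarrow> (le x y \<longleftrightarrow> (\<forall>i<k. Ls i x y)))"

definition poset_dim :: "'a set \<Rightarrow> ('a \<Rightarrow> 'a \<Rightarrow> bool) \<Rightarrow> nat" where
  "poset_dim X le = (LEAST k. k \<ge> 1 \<and> (\<exists>Ls. realizer X le k Ls))"

definition interval_rep :: "'a set \<Rightarrow> ('a \<Rightarrow> 'a \<Rightarrow> bool) \<Rightarrow> ('a \<Rightarrow> real) \<Rightarrow> ('a \<Rightarrow> real) \<Rightarrow> bool" where
  "interval_rep X le l r \<longleftrightarrow>
     (\<forall>x\<in>X. l x \<le> r x) \<and>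
     (\<forall>x\<in>X. \<forall>y\<in>X. x \<noteq> y \<longrightarrow> (le x y \<longleftrightarrow> r x < l y))"

end

theory Submission
  imports Defs "HOL-Library.Product_Lexorder"
begin

text \<open>Describe an interval of length 0 or 1 by its left endpoint \<open>v\<close> and a flag \<open>u\<close> telling
whether it is a unit interval, so that it ends at \<open>v + of_bool u\<close>. Three keys into a
lexicographic order, each strictly increasing along the interval order, give the three linear
extensions. The cell key sorts the unit cells \<open>[i, i + 1)\<close> from left to right and, inside a
cell, puts the points in increasing order before the unit intervals in decreasing order. The two
block keys group the cells in pairs \<open>[2k + q, 2k + q + 2)\<close>, one for each parity \<open>q\<close>, and
inside a block list the points of the lower cell first, then everything else by fractional part.
If \<open>x\<close> does not lie before \<open>y\<close>, the cell of \<open>y\<close> is at most one above that of \<open>x\<close>, and a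
case analysis on the two cells shows that one of the keys puts \<open>y\<close> before \<open>x\<close>. Identical intervals are
separated by an injective index, ascending in the block keys and descending in the cell key.\<close>

lemma poset_dim_le_realizer:
  assumes "realizer X le k Ls" and "1 \<le> k"
  shows "poset_dim X le \<le> k"
  unfolding poset_dim_def by (rule Least_le) (use assms in blast)

lemma linear_extension_of_key:
  fixes K :: "'a \<Rightarrow> 'k::linorder"
  assumes "inj_on K X"
    and "\<And>x y. x \<in> X \<Longrightarrow> y \<in> X \<Longrightarrow> x \<noteq> y \<Longrightarrow> le x y \<Longrightarrow> K x < K y"
  shows "linear_extension X le (\<lambda>x y. K x \<le> K y)"
  using assms unfolding linear_extension_def poset_on_def
  by (auto intro: order_trans dest: inj_onD antisym) (metis less_imp_le order_refl)

lemma realizer_of_keys: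
  fixes K :: "nat \<Rightarrow> 'a \<Rightarrow> 'k::linorder"
  assumes inj: "\<And>i. i < k \<Longrightarrow> inj_on (K i) X"
    and mono: "\<And>i x y. i < k \<Longrightarrow> x \<in> X \<Longrightarrow> y \<in> X \<Longrightarrow> x \<noteq> y \<Longrightarrow> le x y \<Longrightarrow> K i x < K i y"
    and separate: "\<And>x y. x \<in> X \<Longrightarrow> y \<in> X \<Longrightarrow> x \<noteq> y \<Longrightarrow> \<not> le x y \<Longrightarrow> \<exists>i<k. K i y < K i x"
  shows "realizer X le k (\<lambda>i x y. K i x \<le> K i y)"
  unfolding realizer_def
proof (intro conjI allI impI ballI)
  fix i assume "i < k"
  then show "linear_extension X le (\<lambda>x y. K i x \<le> K i y)"
    by (intro linear_extension_of_key inj mono)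
next
  fix x y assume "x \<in> X" "y \<in> X" "x \<noteq> y"
  then show "le x y \<longleftrightarrow> (\<forall>i<k. K i x \<le> K i y)"
    using mono[of _ x y] separate[of x y] by (meson less_imp_le not_le)
qed

definition cell_key :: "real \<Rightarrow> bool \<Rightarrow> int \<times> real \<times> real" where
  "cell_key v u = (\<lfloor>v\<rfloor>, of_bool u, if u then - v else v)"

text \<open>For equal fractional parts the third component lists the unit interval of the upper
cell, then the point of the upper cell, then the unit interval of the lower cell. These
intervals pairwise meet, and this is the reverse of the order the cell key gives them.\<close>
definition block_key :: "int \<Rightarrow> real \<Rightarrow> bool \<Rightarrow> int \<times> real \<times> real" where
  "block_key q v u =
    ((\<lfloor>v\<rfloor> - q) div 2,
     if u \<or> odd (\<lfloor>v\<rfloor> - q) then frac v else -1,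
     if u then - of_int \<lfloor>v\<rfloor> else if odd (\<lfloor>v\<rfloor> - q) then 1/2 - of_int \<lfloor>v\<rfloor> else frac v)"

lemma cell_key_strict_mono:
  assumes "a + of_bool ua < b"
  shows "cell_key a ua < cell_key b ub"
proof -
  have "\<lfloor>a\<rfloor> + of_bool ua \<le> \<lfloor>b\<rfloor>"
    using floor_mono[of "a + of_bool ua" b] assms by (cases ua) auto
  then show ?thesis
    using assms unfolding cell_key_def by (cases ua; cases ub) auto
qed

lemma div2_less_or_same_block:
  fixes i j q :: int
  assumes "i \<le> j"
  shows "(i - q) div 2 < (j - q) div 2 \<or> j = i \<or> j = i + 1 \<and> even (i - q)"
  using assms by presburger

lemma block_key_strict_mono:
  assumes "a + of_bool ua < b"
  shows "block_key q a ua < block_key q b ub"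
proof -
  note [simp del] = of_int_floor_le real_of_int_floor_add_one_gt
  note cells = of_int_floor_le[of a] of_int_floor_le[of b]
    real_of_int_floor_add_one_gt[of a] real_of_int_floor_add_one_gt[of b]
  have "\<lfloor>a\<rfloor> + of_bool ua \<le> \<lfloor>b\<rfloor>"
    using floor_mono[of "a + of_bool ua" b] assms by (cases ua) auto
  then consider "(\<lfloor>a\<rfloor> - q) div 2 < (\<lfloor>b\<rfloor> - q) div 2"
    | "\<lfloor>b\<rfloor> = \<lfloor>a\<rfloor>" "\<not> ua"
    | "\<lfloor>b\<rfloor> = \<lfloor>a\<rfloor> + 1" "even (\<lfloor>a\<rfloor> - q)"
    using div2_less_or_same_block[of "\<lfloor>a\<rfloor>" "\<lfloor>b\<rfloor>" q] by (cases ua) auto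
  then show ?thesis
  proof cases
    case 1
    then show ?thesis unfolding block_key_def by simp
  next
    case 2
    then show ?thesis
      using assms cells unfolding block_key_def frac_def by auto
  next
    case 3
    moreover have "(\<lfloor>a\<rfloor> + 1 - q) div 2 = (\<lfloor>a\<rfloor> - q) div 2" "odd (\<lfloor>a\<rfloor> + 1 - q)"
      using 3 by presburger+
    ultimately show ?thesis
      using assms cells unfolding block_key_def frac_def by auto
  qed
qed

lemma ex_offset_with_parity: "\<exists>q\<in>{0, 1::int}. odd (i - q) = p"
  by (cases "even i"; cases p) force+

lemma same_cell_reversed:
  assumes "\<lfloor>b\<rfloor> = \<lfloor>a\<rfloor>" and "b \<le> a + of_bool ua" and "(a, ua) \<noteq> (b, ub)"
  shows "(\<exists>q\<in>{0, 1}. block_key q b ub < block_key q a ua) \<or> cell_key b ub < cell_key a ua"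
proof -
  note [simp del] = of_int_floor_le real_of_int_floor_add_one_gt
  note cells = of_int_floor_le[of a] of_int_floor_le[of b]
    real_of_int_floor_add_one_gt[of a] real_of_int_floor_add_one_gt[of b]
  obtain q_even q_odd where "q_even \<in> {0, 1}" "even (\<lfloor>a\<rfloor> - q_even)"
    and "q_odd \<in> {0, 1}" "odd (\<lfloor>a\<rfloor> - q_odd)"
    using ex_offset_with_parity[of "\<lfloor>a\<rfloor>" False] ex_offset_with_parity[of "\<lfloor>a\<rfloor>" True] by blast
  consider "ua" "ub" "a < b" | "ua = ub" "b < a" | "ua" "\<not> ub" | "\<not> ua" "ub"
    using assms(2,3) by (cases ua; cases ub) (auto, meson linorder_neqE_linordered_idom)
  then show ?thesis
  proof cases
    case 1
    then show ?thesis using assms(1) unfolding cell_key_def by simp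
  next
    case 2
    then have "block_key q_even b ub < block_key q_even a ua"
      using assms(1) cells unfolding block_key_def frac_def by auto
    then show ?thesis using \<open>q_even \<in> {0, 1}\<close> by blast
  next
    case 3
    then have "block_key q_even b ub < block_key q_even a ua"
      using assms(1) \<open>even (\<lfloor>a\<rfloor> - q_even)\<close> cells unfolding block_key_def frac_def by auto
    then show ?thesis using \<open>q_even \<in> {0, 1}\<close> by blast
  next
    case 4
    then have "block_key q_odd b ub < block_key q_odd a ua"
      using assms \<open>odd (\<lfloor>a\<rfloor> - q_odd)\<close> cells unfolding block_key_def frac_def by auto
    then show ?thesis using \<open>q_odd \<in> {0, 1}\<close> by blast
  qed
qed

lemma next_cell_reversed:
  assumes "\<lfloor>b\<rfloor> = \<lfloor>a\<rfloor> + 1" and "b \<le> a + of_bool ua"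
  shows "\<exists>q\<in>{0, 1}. block_key q b ub < block_key q a ua"
proof -
  note [simp del] = of_int_floor_le real_of_int_floor_add_one_gt
  note cells = of_int_floor_le[of a] of_int_floor_le[of b]
    real_of_int_floor_add_one_gt[of a] real_of_int_floor_add_one_gt[of b]
  obtain q where "q \<in> {0, 1}" "even (\<lfloor>a\<rfloor> - q)"
    using ex_offset_with_parity[of "\<lfloor>a\<rfloor>" False] by blast
  moreover have "(\<lfloor>a\<rfloor> + 1 - q) div 2 = (\<lfloor>a\<rfloor> - q) div 2" "odd (\<lfloor>a\<rfloor> + 1 - q)"
    using \<open>even (\<lfloor>a\<rfloor> - q)\<close> by presburger+
  moreover have ua using assms cells by (cases ua) auto
  ultimately have "block_key q b ub < block_key q a ua"
    using assms cells unfolding block_key_def frac_def by auto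
  then show ?thesis using \<open>q \<in> {0, 1}\<close> by blast
qed

lemma key_reversed_unless_before:
  assumes "b \<le> a + of_bool ua" and "(a, ua) \<noteq> (b, ub)"
  shows "(\<exists>q\<in>{0, 1}. block_key q b ub < block_key q a ua) \<or> cell_key b ub < cell_key a ua"
proof -
  have "\<lfloor>b\<rfloor> \<le> \<lfloor>a\<rfloor> + 1"
    using floor_mono[OF assms(1)] by (cases ua) auto
  then consider "\<lfloor>b\<rfloor> < \<lfloor>a\<rfloor>" | "\<lfloor>b\<rfloor> = \<lfloor>a\<rfloor>" | "\<lfloor>b\<rfloor> = \<lfloor>a\<rfloor> + 1"
    by linarith
  then show ?thesis
  proof cases
    case 1
    then show ?thesis unfolding cell_key_def by simp
  next
    case 2
    then show ?thesis using same_cell_reversed assms by blast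
  next
    case 3
    then show ?thesis using next_cell_reversed assms by blast
  qed
qed

definition tagged_key :: "nat \<Rightarrow> real \<Rightarrow> bool \<Rightarrow> int \<Rightarrow> (int \<times> real \<times> real) \<times> int" where
  "tagged_key i v u s = (if i < 2 then (block_key (int i) v u, s) else (cell_key v u, - s))"

lemma tagged_key_eq_imp_tag_eq: "tagged_key i a ua s = tagged_key i b ub t \<Longrightarrow> s = t"
  by (auto simp: tagged_key_def split: if_splits)

lemma tagged_key_strict_mono:
  "a + of_bool ua < b \<Longrightarrow> tagged_key i a ua s < tagged_key i b ub t"
  using block_key_strict_mono cell_key_strict_mono by (simp add: tagged_key_def)

lemma tagged_key_reversed:
  assumes "b \<le> a + of_bool ua" and "(a, ua, s) \<noteq> (b, ub, t)"
  shows "\<exists>i<3. tagged_key i b ub t < tagged_key i a ua s"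
proof (cases "(a, ua) = (b, ub)")
  case True
  with assms(2) have "tagged_key 0 b ub t < tagged_key 0 a ua s \<or> tagged_key 2 b ub t < tagged_key 2 a ua s"
    by (auto simp: tagged_key_def)
  then show ?thesis by force
next
  case False
  with key_reversed_unless_before[OF assms(1)]
  consider q where "q \<in> {0, 1}" "block_key q b ub < block_key q a ua" | "cell_key b ub < cell_key a ua"
    by blast
  then show ?thesis
  proof cases
    case 1
    then show ?thesis by (intro exI[of _ "nat q"]) (auto simp: tagged_key_def)
  next
    case 2
    then show ?thesis by (intro exI[of _ 2]) (simp add: tagged_key_def)
  qed
qed

theorem theorem3:
  fixes X :: "'a set" and le :: "'a \<Rightarrow> 'a \<Rightarrow> bool"
    and l r :: "'a \<Rightarrow> real"
  assumes "finite X"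
    and "poset_on X le"
    and "interval_rep X le l r"
    and "\<forall>x\<in>X. r x - l x = 0 \<or> r x - l x = 1"
  shows "poset_dim X le \<le> 3"
proof -
  define u where "u x \<longleftrightarrow> r x - l x = 1" for x
  have before: "le x y \<longleftrightarrow> l x + of_bool (u x) < l y" if "x \<in> X" "y \<in> X" "x \<noteq> y" for x y
    using assms(3,4) that unfolding interval_rep_def u_def by force
  obtain t :: "'a \<Rightarrow> nat" where "inj_on t X"
    using finite_imp_inj_to_nat_seg[OF assms(1)] by blast
  define K where "K i x = tagged_key i (l x) (u x) (int (t x))" for i x
  have "realizer X le 3 (\<lambda>i x y. K i x \<le> K i y)"
  proof (rule realizer_of_keys)
    show "inj_on (K i) X" for i
      using \<open>inj_on t X\<close> tagged_key_eq_imp_tag_eq unfolding K_def inj_on_def by fastforce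
    show "K i x < K i y" if "x \<in> X" "y \<in> X" "x \<noteq> y" "le x y" for i x y
      using before that tagged_key_strict_mono unfolding K_def by blast
    show "\<exists>i<3. K i y < K i x" if "x \<in> X" "y \<in> X" "x \<noteq> y" "\<not> le x y" for x y
      using before[OF that(1-3)] that tagged_key_reversed \<open>inj_on t X\<close>
      unfolding K_def inj_on_def by (metis not_less of_nat_eq_iff prod.inject)
  qed
  then show ?thesis by (rule poset_dim_le_realizer) simp
qed

end
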